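(* On the domain $\{(p,q,r): p<q,\ r>1\}$, $\Theta(p,q,r)$ is monotone increasing in $p$ (for fixed $q$ and $r$) and monotone decreasing in $q$ (for fixed $p$ and $r$).
   Context: For $p<q$ and $r>1$ define $$\Theta(p,q,r)=\int_1^r\frac{dx}{\sqrt{\left(\frac{r^p-r^q}{r^p-1}+\frac{r^q-1}{r^p-1}x^p\right)^{2/q}-x^2}}\quad (p\ne0,\ q\ne0),$$ $$\Theta(0,q,r)=\int_1^r\frac{dx}{\sqrt{\left(1+\frac{r^q-1}{\log r}\log x\right)^{2/q}-x^2}},\qquad \Theta(p,0,r)=\int_1^r\frac{dx}{\sqrt{r^{\frac{2(x^p-1)}{r^p-1}}-x^2}}.$$ *)

theory Defs
  imports "HOL-Analysis.Analysis"
begin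

text \<open>The integrand of Theta(p,q,r). The square root is singular at both
endpoints x = 1 and x = r, so the integral is an improper integral; we use the
Lebesgue interval integral over (1, r).\<close>

definition Theta_integrand :: "real \<Rightarrow> real \<Rightarrow> real \<Rightarrow> real \<Rightarrow> real" where
  "Theta_integrand p q r x =
     (if p = 0 then
        1 / sqrt ((1 + (r powr q - 1) / ln r * ln x) powr (2 / q) - x\<^sup>2)
      else if q = 0 then
        1 / sqrt (r powr (2 * (x powr p - 1) / (r powr p - 1)) - x\<^sup>2)
      else
        1 / sqrt (((r powr p - r powr q) / (r powr p - 1)
                   + (r powr q - 1) / (r powr p - 1) * x powr p) powr (2 / q) - x\<^sup>2))"

definition Theta :: "real \<Rightarrow> real \<Rightarrow> real \<Rightarrow> real" where
  "Theta p q r = (LBINT x=1..r. Theta_integrand p q r x)"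

end

theory Submission
  imports Defs
begin

text \<open>Put F_s(y) = (y^s - 1) / (r^s - 1), read as ln y / ln r when s = 0. It maps [1, r]
  increasingly onto [0, 1], and for p < q the integrand of Theta(p,q,r) is
  1 / sqrt(g(x)^2 - x^2) with g = F_q^(-1) o F_p. For fixed y in [1, r], F_s(y) decreases in s;
  hence g decreases in p and increases in q, and both monotonicity claims hold pointwise for the
  integrands.

  Integrability follows from the quantitative gap
  F_p - F_q >= c F_q (1 - F_q), which bounds the integrand by a multiple of
  F_q' / sqrt(F_q (1 - F_q)), the derivative of arcsin(2 F_q - 1).\<close>

lemma powr_between_one_and_endpoint:
  fixes r z e :: real
  assumes "1 \<le> z" "z \<le> r"
  shows "min 1 (r powr e) \<le> z powr e" "z powr e \<le> max 1 (r powr e)"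
proof -
  have "min 1 (r powr e) \<le> z powr e \<and> z powr e \<le> max 1 (r powr e)"
  proof (cases "0 \<le> e")
    case True
    then show ?thesis
      using assms ge_one_powr_ge_zero[of z e] powr_mono2[of e z r] by auto
  next
    case False
    then show ?thesis
      using assms powr_mono2'[of e z r] powr_mono[of e 0 z] by auto
  qed
  then show "min 1 (r powr e) \<le> z powr e" "z powr e \<le> max 1 (r powr e)" by auto
qed

lemma DERIV_antitone_factor_imp_nonneg:
  fixes K psi phi :: "real \<Rightarrow> real"
  assumes y: "a \<le> y" "y \<le> b" and ends: "K a = 0" "K b = 0"
    and deriv: "\<And>z. a \<le> z \<Longrightarrow> z \<le> b \<Longrightarrow> (K has_real_derivative psi z * phi z) (at z)"
    and psi_pos: "\<And>z. a \<le> z \<Longrightarrow> z \<le> b \<Longrightarrow> 0 < psi z"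
    and phi_antitone: "\<And>z1 z2. a \<le> z1 \<Longrightarrow> z1 \<le> z2 \<Longrightarrow> z2 \<le> b \<Longrightarrow> phi z2 \<le> phi z1"
  shows "0 \<le> K y"
proof (cases "0 \<le> phi y")
  case True
  have "K a \<le> K y"
  proof (rule DERIV_nonneg_imp_nondecreasing[OF y(1)])
    fix z assume z: "a \<le> z" "z \<le> y"
    have "0 \<le> phi z" using True phi_antitone[of z y] z y by force
    then have "0 \<le> psi z * phi z" using psi_pos[of z] z y by simp
    then show "\<exists>d. (K has_real_derivative d) (at z) \<and> 0 \<le> d" using deriv[of z] z y by auto
  qed
  then show ?thesis using ends by simp
next
  case False
  have "K y \<ge> K b"
  proof (rule DERIV_nonpos_imp_nonincreasing[OF y(2)])
    fix z assume z: "y \<le> z" "z \<le> b"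
    have "phi z \<le> 0" using False phi_antitone[of y z] z y by force
    then have "psi z * phi z \<le> 0" using psi_pos[of z] z y by (simp add: mult_nonneg_nonpos)
    then show "\<exists>d. (K has_real_derivative d) (at z) \<and> d \<le> 0" using deriv[of z] z y by auto
  qed
  then show ?thesis using ends by simp
qed

text \<open>The integrand is the derivative of arcsin (2 F - 1).\<close>
lemma set_integrable_deriv_div_sqrt:
  fixes F f :: "real \<Rightarrow> real" and a b :: real
  assumes "a < b" and F_cont: "continuous_on {a..b} F"
    and F_range: "\<And>x. a \<le> x \<Longrightarrow> x \<le> b \<Longrightarrow> 0 \<le> F x \<and> F x \<le> 1"
    and F_strict: "\<And>x. a < x \<Longrightarrow> x < b \<Longrightarrow> 0 < F x \<and> F x < 1"
    and F_deriv: "\<And>x. a < x \<Longrightarrow> x < b \<Longrightarrow> (F has_real_derivative f x) (at x)"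
    and f_cont: "\<And>x. a < x \<Longrightarrow> x < b \<Longrightarrow> isCont f x"
    and f_nonneg: "\<And>x. a < x \<Longrightarrow> x < b \<Longrightarrow> 0 \<le> f x"
  shows "set_integrable lborel (einterval a b) (\<lambda>x. f x / sqrt (F x * (1 - F x)))"
proof (rule interval_integral_FTC_nonneg(1)[where F = "\<lambda>x. arcsin (2 * F x - 1)"])
  show "ereal a < ereal b" using \<open>a < b\<close> by simp
next
  fix x assume "ereal a < ereal x" "ereal x < ereal b"
  then have x: "a < x" "x < b" by auto
  have F: "0 < F x * (1 - F x)" using F_strict[OF x] by simp
  have "1 - (2 * F x - 1)\<^sup>2 = 4 * (F x * (1 - F x))"
    by (simp add: power2_eq_square algebra_simps)
  then have sqrt_eq: "sqrt (1 - (2 * F x - 1)\<^sup>2) = 2 * sqrt (F x * (1 - F x))"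
    by (simp add: real_sqrt_mult)
  have "((\<lambda>x. arcsin (2 * F x - 1)) has_real_derivative
          inverse (sqrt (1 - (2 * F x - 1)\<^sup>2)) * (2 * f x - 0)) (at x)"
    using F_strict[OF x]
    by (intro DERIV_chain2[OF DERIV_arcsin] DERIV_diff DERIV_cmult F_deriv[OF x] DERIV_const) auto
  moreover have "inverse (sqrt (1 - (2 * F x - 1)\<^sup>2)) * (2 * f x - 0) = f x / sqrt (F x * (1 - F x))"
    unfolding sqrt_eq using F by (simp add: field_simps)
  ultimately show "((\<lambda>x. arcsin (2 * F x - 1)) has_real_derivative f x / sqrt (F x * (1 - F x))) (at x)"
    by simp
  have "isCont F x" using F_deriv[OF x] by (rule DERIV_isCont)
  then show "isCont (\<lambda>x. f x / sqrt (F x * (1 - F x))) x"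
    using f_cont[OF x] F by (auto intro!: continuous_intros)
next
  show "AE x in lborel. ereal a < ereal x \<longrightarrow> ereal x < ereal b \<longrightarrow> 0 \<le> f x / sqrt (F x * (1 - F x))"
  proof (intro AE_I2 impI)
    fix x assume "ereal a < ereal x" "ereal x < ereal b"
    then have x: "a < x" "x < b" by auto
    then show "0 \<le> f x / sqrt (F x * (1 - F x))"
      using f_nonneg[OF x] F_strict[OF x] by simp
  qed
next
  have cont: "continuous_on {a..b} (\<lambda>x. arcsin (2 * F x - 1))"
    using F_range by (intro continuous_intros F_cont) auto
  show "(((\<lambda>x. arcsin (2 * F x - 1)) \<circ> real_of_ereal) \<longlongrightarrow> arcsin (2 * F a - 1)) (at_right (ereal a))"
    unfolding ereal_tendsto_simps1 using continuous_on_Icc_at_rightD[OF cont \<open>a < b\<close>] .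
  show "(((\<lambda>x. arcsin (2 * F x - 1)) \<circ> real_of_ereal) \<longlongrightarrow> arcsin (2 * F b - 1)) (at_left (ereal b))"
    unfolding ereal_tendsto_simps1 using continuous_on_Icc_at_leftD[OF cont \<open>a < b\<close>] .
qed

lemma divide_sqrt_antimono: "0 < u \<Longrightarrow> u \<le> v \<Longrightarrow> 1 / sqrt v \<le> 1 / sqrt (u::real)"
  by (intro divide_left_mono) auto

definition npow_coeff :: "real \<Rightarrow> real \<Rightarrow> real" where
  "npow_coeff s r = (if s = 0 then 1 / ln r else s / (r powr s - 1))"

definition npow :: "real \<Rightarrow> real \<Rightarrow> real \<Rightarrow> real" where
  "npow s r y = (if s = 0 then ln y / ln r else (y powr s - 1) / (r powr s - 1))"

definition npow_inv :: "real \<Rightarrow> real \<Rightarrow> real \<Rightarrow> real" where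
  "npow_inv s r w = (if s = 0 then r powr w else (1 + (r powr s - 1) * w) powr (1 / s))"

lemma npow_coeff_pos:
  assumes "1 < r"
  shows "0 < npow_coeff s r"
proof -
  consider "s = 0" | "0 < s" | "s < 0" by linarith
  then show ?thesis
    using assms gr_one_powr[of r s] powr_less_one[of r s]
    by cases (auto simp: npow_coeff_def divide_neg_neg)
qed

lemma has_real_derivative_npow:
  assumes "1 < r" "0 < y"
  shows "(npow s r has_real_derivative npow_coeff s r * y powr (s - 1)) (at y)"
proof (cases "s = 0")
  case True
  have "((\<lambda>y. ln y / ln r) has_real_derivative (1 / y) / ln r) (at y)"
    using assms by (auto intro!: derivative_eq_intros)
  moreover have "(1 / y) / ln r = npow_coeff s r * y powr (s - 1)"
    using True assms by (simp add: npow_coeff_def powr_neg_one)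
  ultimately show ?thesis
    using True by (simp add: npow_def[abs_def])
next
  case False
  have "((\<lambda>y. (y powr s - 1) / (r powr s - 1)) has_real_derivative
          (s * y powr (s - 1)) / (r powr s - 1)) (at y)"
    using assms False by (auto intro!: derivative_eq_intros)
  then show ?thesis
    using False by (simp add: npow_def[abs_def] npow_coeff_def)
qed

lemma npow_one [simp]: "npow s r 1 = 0"
  by (simp add: npow_def)

lemma npow_self: "1 < r \<Longrightarrow> npow s r r = 1"
  by (simp add: npow_def)

lemma npow_strict_mono:
  assumes "1 < r" "0 < y1" "y1 < y2"
  shows "npow s r y1 < npow s r y2"
proof (rule DERIV_pos_imp_increasing[OF assms(3)])
  fix z assume "y1 \<le> z" "z \<le> y2"
  then show "\<exists>d. (npow s r has_real_derivative d) (at z) \<and> 0 < d"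
    using assms has_real_derivative_npow[of r z s] npow_coeff_pos[OF assms(1), of s] by force
qed

lemma npow_le_iff:
  assumes "1 < r" "0 < y1" "0 < y2"
  shows "npow s r y1 \<le> npow s r y2 \<longleftrightarrow> y1 \<le> y2"
proof
  assume "npow s r y1 \<le> npow s r y2"
  then show "y1 \<le> y2"
    using npow_strict_mono[OF assms(1) assms(3), of y1 s] by (meson not_le)
next
  assume "y1 \<le> y2"
  then show "npow s r y1 \<le> npow s r y2"
    using npow_strict_mono[OF assms(1) assms(2), of y2 s] by (cases "y1 = y2") auto
qed

lemma npow_range:
  assumes "1 < r" "1 \<le> y" "y \<le> r"
  shows "0 \<le> npow s r y" "npow s r y \<le> 1"
proof -
  show "0 \<le> npow s r y" using npow_le_iff[of r 1 y s] assms by simp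
  show "npow s r y \<le> 1" using npow_le_iff[of r y r s] npow_self[of r s] assms by simp
qed

lemma npow_strict_range:
  assumes "1 < r" "1 < y" "y < r"
  shows "0 < npow s r y" "npow s r y < 1"
proof -
  show "0 < npow s r y" using npow_strict_mono[of r 1 y s] assms by simp
  show "npow s r y < 1" using npow_strict_mono[of r y r s] npow_self[of r s] assms by simp
qed

lemma continuous_on_npow:
  assumes "1 < r"
  shows "continuous_on {1..r} (npow s r)"
proof (intro continuous_at_imp_continuous_on ballI)
  fix y assume "y \<in> {1..r}"
  then show "isCont (npow s r) y"
    using has_real_derivative_npow[OF assms, of y s] DERIV_isCont by auto
qed

lemma npow_inv_base_pos:
  fixes r s w :: real
  assumes "1 < r" "0 \<le> w" "w \<le> 1"
  shows "0 < 1 + (r powr s - 1) * w"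
proof -
  have "0 < (1 - w) + w * r powr s"
  proof (cases "w = 1")
    case True
    have "r \<noteq> 0" using assms by simp
    with True show ?thesis by simp
  next
    case False
    moreover have "0 \<le> w * r powr s" using assms by simp
    ultimately show ?thesis using assms by linarith
  qed
  then show ?thesis by (simp add: algebra_simps)
qed

lemma npow_inv_pos:
  assumes "1 < r" "0 \<le> w" "w \<le> 1"
  shows "0 < npow_inv s r w"
  using npow_inv_base_pos[OF assms, of s] assms by (simp add: npow_inv_def)

lemma npow_npow_inv:
  assumes "1 < r" "0 \<le> w" "w \<le> 1"
  shows "npow s r (npow_inv s r w) = w"
proof (cases "s = 0")
  case True
  then show ?thesis using assms by (simp add: npow_inv_def npow_def ln_powr)
next
  case False
  then have "npow_inv s r w powr s = 1 + (r powr s - 1) * w"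
    using npow_inv_base_pos[OF assms, of s] by (simp add: npow_inv_def powr_powr)
  then show ?thesis
    using False assms by (simp add: npow_def npow_inv_def)
qed

lemma npow_diff_le:
  assumes r: "1 < r" and xy: "1 \<le> x" "x \<le> y" "y \<le> r"
  shows "npow s r y - npow s r x \<le> npow_coeff s r * max 1 (r powr (s - 1)) * (y - x)"
proof -
  define M where "M = npow_coeff s r * max 1 (r powr (s - 1))"
  have "M * x - npow s r x \<le> M * y - npow s r y"
  proof (rule DERIV_nonneg_imp_nondecreasing[OF xy(2)])
    fix z assume "x \<le> z" "z \<le> y"
    then have z: "1 \<le> z" "z \<le> r" using xy by auto
    have "((\<lambda>z. M * z - npow s r z) has_real_derivative M * 1 - npow_coeff s r * z powr (s - 1)) (at z)"
      using z r by (intro DERIV_diff DERIV_cmult DERIV_ident has_real_derivative_npow) auto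
    moreover have "npow_coeff s r * z powr (s - 1) \<le> M"
      unfolding M_def using powr_between_one_and_endpoint(2)[OF z] less_imp_le[OF npow_coeff_pos[OF r]]
      by (intro mult_left_mono) auto
    ultimately show "\<exists>d. ((\<lambda>z. M * z - npow s r z) has_real_derivative d) (at z) \<and> 0 \<le> d"
      by force
  qed
  then show ?thesis by (simp add: M_def algebra_simps)
qed

text \<open>Chosen so that the function in npow_gap_factor_antitone has a nonpositive derivative
  on [1, r].\<close>
definition npow_gap_const :: "real \<Rightarrow> real \<Rightarrow> real \<Rightarrow> real" where
  "npow_gap_const s1 s2 r =
     npow_coeff s1 r * (s2 - s1) * min 1 (r powr (s1 - 2 * s2)) / (2 * (npow_coeff s2 r)\<^sup>2)"

lemma npow_gap_const_pos: "1 < r \<Longrightarrow> s1 < s2 \<Longrightarrow> 0 < npow_gap_const s1 s2 r"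
  using npow_coeff_pos[of r s1] npow_coeff_pos[of r s2] by (simp add: npow_gap_const_def)

lemma npow_gap_factor_antitone:
  assumes r: "1 < r" and s: "s1 < s2" and z: "1 \<le> z1" "z1 \<le> z2" "z2 \<le> r"
  defines "k \<equiv> npow_coeff s1 r / npow_coeff s2 r" and "c \<equiv> npow_gap_const s1 s2 r"
  shows "k * z2 powr (s1 - s2) + 2 * c * npow s2 r z2 \<le> k * z1 powr (s1 - s2) + 2 * c * npow s2 r z1"
proof (rule DERIV_nonpos_imp_nonincreasing[OF z(2)])
  fix x assume "z1 \<le> x" "x \<le> z2"
  then have x: "1 \<le> x" "x \<le> r" using z by auto
  have k: "0 < k" using npow_coeff_pos[OF r] by (simp add: k_def)
  have deriv: "((\<lambda>x. k * x powr (s1 - s2) + 2 * c * npow s2 r x) has_real_derivative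
      k * ((s1 - s2) * x powr (s1 - s2 - 1)) + 2 * c * (npow_coeff s2 r * x powr (s2 - 1))) (at x)"
    using x r by (intro DERIV_add DERIV_cmult has_real_derivative_powr has_real_derivative_npow) auto
  have "2 * c * (npow_coeff s2 r * x powr (s2 - 1))
      = k * (s2 - s1) * (min 1 (r powr (s1 - 2 * s2)) * x powr (s2 - 1))"
    using npow_coeff_pos[OF r, of s2]
    by (simp add: c_def k_def npow_gap_const_def power2_eq_square)
  also have "\<dots> \<le> k * (s2 - s1) * (x powr (s1 - 2 * s2) * x powr (s2 - 1))"
    using powr_between_one_and_endpoint(1)[OF x, of "s1 - 2 * s2"] k s
    by (intro mult_left_mono mult_right_mono) auto
  also have "\<dots> = k * (s2 - s1) * x powr (s1 - s2 - 1)"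
    using x by (simp add: powr_add[symmetric] algebra_simps)
  finally have "k * ((s1 - s2) * x powr (s1 - s2 - 1)) + 2 * c * (npow_coeff s2 r * x powr (s2 - 1)) \<le> 0"
    by (simp add: algebra_simps)
  with deriv show "\<exists>d. ((\<lambda>x. k * x powr (s1 - s2) + 2 * c * npow s2 r x) has_real_derivative d) (at x)
      \<and> d \<le> 0" by blast
qed

text \<open>The difference K of the two sides vanishes at 1 and r, and K' is a positive function
  times the antitone factor above: K first increases, then decreases.\<close>
lemma npow_gap:
  assumes r: "1 < r" and s: "s1 < s2" and y: "1 \<le> y" "y \<le> r"
  shows "npow_gap_const s1 s2 r * (npow s2 r y * (1 - npow s2 r y)) \<le> npow s1 r y - npow s2 r y"
proof -
  define k where "k = npow_coeff s1 r / npow_coeff s2 r"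
  define c where "c = npow_gap_const s1 s2 r"
  define K where "K z = npow s1 r z - npow s2 r z - c * (npow s2 r z * (1 - npow s2 r z))" for z
  define psi where "psi z = npow_coeff s2 r * z powr (s2 - 1)" for z
  define phi where "phi z = k * z powr (s1 - s2) + 2 * c * npow s2 r z - 1 - c" for z
  have "0 \<le> K y"
  proof (rule DERIV_antitone_factor_imp_nonneg[OF y, of K psi phi])
    show "K 1 = 0" "K r = 0" using r by (simp_all add: K_def npow_self)
    show "0 < psi z" if "1 \<le> z" for z
      using that npow_coeff_pos[OF r] by (simp add: psi_def)
    show "phi z2 \<le> phi z1" if "1 \<le> z1" "z1 \<le> z2" "z2 \<le> r" for z1 z2
      using npow_gap_factor_antitone[OF r s that] by (simp add: phi_def k_def c_def)
  next
    fix z assume z: "1 \<le> z" "z \<le> r"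
    have deriv: "(K has_real_derivative
         npow_coeff s1 r * z powr (s1 - 1) - npow_coeff s2 r * z powr (s2 - 1)
         - c * (npow_coeff s2 r * z powr (s2 - 1) * (1 - npow s2 r z)
                + (0 - npow_coeff s2 r * z powr (s2 - 1)) * npow s2 r z)) (at z)"
      unfolding K_def[abs_def] using z r
      by (intro DERIV_diff DERIV_cmult DERIV_mult has_real_derivative_npow DERIV_const) auto
    have "z powr (s1 - 1) = z powr (s2 - 1) * z powr (s1 - s2)"
      using z by (simp add: powr_add[symmetric])
    then have "npow_coeff s1 r * z powr (s1 - 1) - npow_coeff s2 r * z powr (s2 - 1)
         - c * (npow_coeff s2 r * z powr (s2 - 1) * (1 - npow s2 r z)
                + (0 - npow_coeff s2 r * z powr (s2 - 1)) * npow s2 r z)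
         = psi z * phi z"
      using npow_coeff_pos[OF r, of s2] by (simp add: psi_def phi_def k_def field_simps)
    with deriv show "(K has_real_derivative psi z * phi z) (at z)" by simp
  qed
  then show ?thesis by (simp add: K_def c_def)
qed

lemma npow_antimono_exponent:
  assumes r: "1 < r" and s: "s1 \<le> s2" and y: "1 \<le> y" "y \<le> r"
  shows "npow s2 r y \<le> npow s1 r y"
proof (cases "s1 = s2")
  case False
  with s have "s1 < s2" by simp
  have "0 \<le> npow_gap_const s1 s2 r * (npow s2 r y * (1 - npow s2 r y))"
    using npow_gap_const_pos[OF r \<open>s1 < s2\<close>] npow_range[OF r y, of s2] by simp
  then show ?thesis using npow_gap[OF r \<open>s1 < s2\<close> y] by linarith
qed simp

definition npow_match :: "real \<Rightarrow> real \<Rightarrow> real \<Rightarrow> real \<Rightarrow> real" where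
  "npow_match p q r x = npow_inv q r (npow p r x)"

lemma
  assumes "1 < r" "1 \<le> x" "x \<le> r"
  shows npow_match_pos: "0 < npow_match p q r x"
    and npow_npow_match: "npow q r (npow_match p q r x) = npow p r x"
  using npow_inv_pos[OF assms(1)] npow_npow_inv[OF assms(1)] npow_range[OF assms]
  by (simp_all add: npow_match_def)

lemma npow_match_le:
  assumes r: "1 < r" and x: "1 \<le> x" "x \<le> r"
  shows "npow_match p q r x \<le> r"
proof -
  let ?g = "npow_match p q r x"
  have "npow q r ?g \<le> npow q r r"
    using npow_npow_match[OF r x] npow_range(2)[OF r x] npow_self[OF r] by simp
  then show ?thesis using npow_le_iff[of r ?g r q] npow_match_pos[OF r x] r by simp
qed

lemma npow_match_ge:
  assumes r: "1 < r" and pq: "p \<le> q" and x: "1 \<le> x" "x \<le> r"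
  shows "x \<le> npow_match p q r x"
proof -
  let ?g = "npow_match p q r x"
  have "npow q r x \<le> npow q r ?g"
    using npow_npow_match[OF r x] npow_antimono_exponent[OF r pq x] by simp
  then show ?thesis using npow_le_iff[of r x ?g q] npow_match_pos[OF r x] r x by simp
qed

lemma npow_match_gt:
  assumes r: "1 < r" and pq: "p < q" and x: "1 < x" "x < r"
  shows "x < npow_match p q r x"
proof -
  let ?g = "npow_match p q r x"
  have x': "1 \<le> x" "x \<le> r" using x by auto
  have "0 < npow_gap_const p q r * (npow q r x * (1 - npow q r x))"
    using npow_gap_const_pos[OF r pq] npow_strict_range[OF r x, of q] by simp
  then have "npow q r x < npow q r ?g"
    using npow_gap[OF r pq x'] npow_npow_match[OF r x'] by simp
  then show ?thesis using npow_le_iff[of r ?g x q] npow_match_pos[OF r x'] r x by auto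
qed

lemma Theta_integrand_eq:
  assumes r: "1 < r" and pq: "p < q" and x: "1 \<le> x" "x \<le> r"
  shows "Theta_integrand p q r x = 1 / sqrt ((npow_match p q r x)\<^sup>2 - x\<^sup>2)"
proof (cases "q = 0")
  case True
  then have "p \<noteq> 0" using pq by simp
  have "(r powr npow p r x)\<^sup>2 = r powr (2 * (x powr p - 1) / (r powr p - 1))"
    using \<open>p \<noteq> 0\<close> r by (simp add: npow_def power2_eq_square powr_add[symmetric])
  then show ?thesis
    using True \<open>p \<noteq> 0\<close> by (simp add: Theta_integrand_def npow_match_def npow_inv_def)
next
  case False
  define b where "b = 1 + (r powr q - 1) * npow p r x"
  have b: "0 < b"
    unfolding b_def using npow_inv_base_pos[OF r npow_range[OF r x]] .
  have "(npow_match p q r x)\<^sup>2 = b powr (2 / q)"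
    using False b by (simp add: npow_match_def npow_inv_def b_def power2_eq_square powr_add[symmetric])
  moreover have "Theta_integrand p q r x = 1 / sqrt (b powr (2 / q) - x\<^sup>2)"
  proof (cases "p = 0")
    case True
    then show ?thesis using False by (simp add: Theta_integrand_def b_def npow_def)
  next
    case False
    have affine: "1 + (B - 1) * ((X - 1) / (A - 1)) = (A - B) / (A - 1) + (B - 1) / (A - 1) * X"
      if "A \<noteq> 1" for A B X :: real
      using that by (simp add: divide_simps) (simp add: algebra_simps)
    have "b = (r powr p - r powr q) / (r powr p - 1) + (r powr q - 1) / (r powr p - 1) * x powr p"
      using affine[of "r powr p"] False r by (simp add: b_def npow_def)
    then show ?thesis using False \<open>q \<noteq> 0\<close> by (simp add: Theta_integrand_def)
  qed
  ultimately show ?thesis by simp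
qed

lemma npow_match_sq_diff_lower:
  assumes r: "1 < r" and pq: "p < q" and x: "1 \<le> x" "x \<le> r"
  shows "2 * npow_gap_const p q r / (npow_coeff q r * max 1 (r powr (q - 1)))
           * (npow q r x * (1 - npow q r x))
         \<le> (npow_match p q r x)\<^sup>2 - x\<^sup>2"
proof -
  define g where "g = npow_match p q r x"
  define M where "M = npow_coeff q r * max 1 (r powr (q - 1))"
  define c where "c = npow_gap_const p q r"
  define t where "t = npow q r x * (1 - npow q r x)"
  have M: "0 < M" using npow_coeff_pos[OF r, of q] by (simp add: M_def)
  have g: "x \<le> g" "g \<le> r"
    using npow_match_ge[OF r less_imp_le[OF pq] x] npow_match_le[OF r x] by (simp_all add: g_def)
  have "c * t \<le> npow q r g - npow q r x"
    using npow_gap[OF r pq x] npow_npow_match[OF r x] by (simp add: g_def c_def t_def)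
  also have "\<dots> \<le> M * (g - x)"
    unfolding M_def using npow_diff_le[OF r x(1) g] .
  also have "\<dots> \<le> M * ((g\<^sup>2 - x\<^sup>2) / 2)"
  proof -
    have "2 * (g - x) \<le> (g + x) * (g - x)" using g x by (intro mult_right_mono) auto
    then have "g - x \<le> (g\<^sup>2 - x\<^sup>2) / 2" by (simp add: power2_eq_square algebra_simps)
    then show ?thesis using M by (intro mult_left_mono) auto
  qed
  finally have "2 * c / M * t \<le> g\<^sup>2 - x\<^sup>2"
    using M by (simp add: field_simps)
  then show ?thesis by (simp add: g_def M_def c_def t_def)
qed

lemma Theta_integrand_le_density:
  assumes r: "1 < r" and pq: "p < q"
  obtains C where
    "\<And>x. 1 < x \<Longrightarrow> x < r \<Longrightarrow>
       Theta_integrand p q r x \<le> C * (npow_coeff q r * x powr (q - 1) / sqrt (npow q r x * (1 - npow q r x)))"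
proof
  define B where "B = 2 * npow_gap_const p q r / (npow_coeff q r * max 1 (r powr (q - 1)))"
  define m where "m = npow_coeff q r * min 1 (r powr (q - 1))"
  have B: "0 < B" using npow_gap_const_pos[OF r pq] npow_coeff_pos[OF r, of q] by (simp add: B_def)
  have m: "0 < m" using npow_coeff_pos[OF r, of q] r by (simp add: m_def)
  fix x assume x: "1 < x" "x < r"
  then have x': "1 \<le> x" "x \<le> r" by auto
  define t where "t = npow q r x * (1 - npow q r x)"
  have t: "0 < t" using npow_strict_range[OF r x, of q] by (simp add: t_def)
  have "Theta_integrand p q r x = 1 / sqrt ((npow_match p q r x)\<^sup>2 - x\<^sup>2)"
    using Theta_integrand_eq[OF r pq x'] .
  also have "\<dots> \<le> 1 / sqrt (B * t)"
  proof (rule divide_sqrt_antimono)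
    show "0 < B * t" using B t by simp
    show "B * t \<le> (npow_match p q r x)\<^sup>2 - x\<^sup>2"
      using npow_match_sq_diff_lower[OF r pq x'] by (simp add: B_def t_def)
  qed
  also have "\<dots> = 1 / (sqrt B * m) * (m / sqrt t)"
    using m by (simp add: real_sqrt_mult)
  also have "\<dots> \<le> 1 / (sqrt B * m) * (npow_coeff q r * x powr (q - 1) / sqrt t)"
    using powr_between_one_and_endpoint(1)[OF x', of "q - 1"] npow_coeff_pos[OF r, of q] B m t
    by (intro mult_left_mono divide_right_mono) (auto simp: m_def)
  finally show "Theta_integrand p q r x
      \<le> 1 / (sqrt B * m) * (npow_coeff q r * x powr (q - 1) / sqrt (npow q r x * (1 - npow q r x)))"
    by (simp add: t_def)
qed

lemma Theta_integrand_pos: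
  assumes r: "1 < r" and pq: "p < q" and x: "1 < x" "x < r"
  shows "0 < Theta_integrand p q r x"
proof -
  have "x\<^sup>2 < (npow_match p q r x)\<^sup>2"
    using npow_match_gt[OF r pq x] x by (intro power_strict_mono) auto
  then show ?thesis using Theta_integrand_eq[OF r pq] x by simp
qed

lemma Theta_integrable:
  assumes r: "1 < r" and pq: "p < q"
  shows "set_integrable lborel (einterval (ereal 1) (ereal r)) (Theta_integrand p q r)"
proof -
  obtain C where C: "\<And>x. 1 < x \<Longrightarrow> x < r \<Longrightarrow>
      Theta_integrand p q r x \<le> C * (npow_coeff q r * x powr (q - 1) / sqrt (npow q r x * (1 - npow q r x)))"
    using Theta_integrand_le_density[OF r pq] by blast
  have "set_integrable lborel (einterval (ereal 1) (ereal r))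
      (\<lambda>x. npow_coeff q r * x powr (q - 1) / sqrt (npow q r x * (1 - npow q r x)))"
    using r npow_range[OF r] npow_strict_range[OF r] npow_coeff_pos[OF r, of q]
    by (intro set_integrable_deriv_div_sqrt continuous_on_npow has_real_derivative_npow)
       (auto intro!: continuous_intros)
  then show ?thesis
  proof (rule set_integrable_bound[OF set_integrable_mult_right[where a = C]])
    show "set_borel_measurable lborel (einterval (ereal 1) (ereal r)) (Theta_integrand p q r)"
      unfolding set_borel_measurable_def Theta_integrand_def[abs_def] by measurable
    show "AE x in lborel. x \<in> einterval (ereal 1) (ereal r) \<longrightarrow> norm (Theta_integrand p q r x)
        \<le> norm (C * (npow_coeff q r * x powr (q - 1) / sqrt (npow q r x * (1 - npow q r x))))"
    proof (intro AE_I2 impI)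
      fix x assume "x \<in> einterval (ereal 1) (ereal r)"
      then have x: "1 < x" "x < r" by auto
      let ?h = "C * (npow_coeff q r * x powr (q - 1) / sqrt (npow q r x * (1 - npow q r x)))"
      have "Theta_integrand p q r x \<le> \<bar>?h\<bar>" using C[OF x] abs_ge_self order_trans by blast
      then show "norm (Theta_integrand p q r x) \<le> norm ?h"
        using Theta_integrand_pos[OF r pq x] by (simp del: abs_mult)
    qed
  qed
qed

lemma Theta_le_Theta_if_npow_match_le:
  assumes r: "1 < r" and pq: "p < q" and pq': "p' < q'"
    and le: "\<And>x. 1 < x \<Longrightarrow> x < r \<Longrightarrow> npow_match p' q' r x \<le> npow_match p q r x"
  shows "Theta p q r \<le> Theta p' q' r"
proof -
  have "(LINT x:einterval (ereal 1) (ereal r)|lborel. Theta_integrand p q r x)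
      \<le> (LINT x:einterval (ereal 1) (ereal r)|lborel. Theta_integrand p' q' r x)"
  proof (rule set_integral_mono[OF Theta_integrable[OF r pq] Theta_integrable[OF r pq']])
    fix x assume "x \<in> einterval (ereal 1) (ereal r)"
    then have x: "1 < x" "x < r" by auto
    then have x': "1 \<le> x" "x \<le> r" by auto
    have "x\<^sup>2 < (npow_match p' q' r x)\<^sup>2"
      using npow_match_gt[OF r pq' x] x by (intro power_strict_mono) auto
    moreover have "(npow_match p' q' r x)\<^sup>2 \<le> (npow_match p q r x)\<^sup>2"
      using le[OF x] less_imp_le[OF npow_match_pos[OF r x']] by (intro power_mono)
    ultimately show "Theta_integrand p q r x \<le> Theta_integrand p' q' r x"
      unfolding Theta_integrand_eq[OF r pq x'] Theta_integrand_eq[OF r pq' x']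
      by (intro divide_sqrt_antimono) auto
  qed
  then show ?thesis
    using r by (simp add: Theta_def interval_lebesgue_integral_def one_ereal_def)
qed

lemma npow_match_antimono_left:
  assumes r: "1 < r" and p: "p1 \<le> p2" and x: "1 \<le> x" "x \<le> r"
  shows "npow_match p2 q r x \<le> npow_match p1 q r x"
proof -
  let ?g1 = "npow_match p1 q r x" and ?g2 = "npow_match p2 q r x"
  have "npow q r ?g2 \<le> npow q r ?g1"
    using npow_antimono_exponent[OF r p x] npow_npow_match[OF r x] by simp
  then show ?thesis using npow_le_iff[of r ?g2 ?g1 q] npow_match_pos[OF r x] r by simp
qed

lemma npow_match_mono_right:
  assumes r: "1 < r" and pq: "p < q1" and q: "q1 \<le> q2" and x: "1 \<le> x" "x \<le> r"
  shows "npow_match p q1 r x \<le> npow_match p q2 r x"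
proof -
  let ?g1 = "npow_match p q1 r x" and ?g2 = "npow_match p q2 r x"
  have g1: "1 \<le> ?g1" "?g1 \<le> r"
    using npow_match_ge[OF r less_imp_le[OF pq] x] npow_match_le[OF r x] x by auto
  have "npow q2 r ?g1 \<le> npow q2 r ?g2"
    using npow_antimono_exponent[OF r q g1] npow_npow_match[OF r x] by simp
  then show ?thesis using npow_le_iff[of r ?g1 ?g2 q2] npow_match_pos[OF r x] r by simp
qed

theorem theorem5p1:
  shows "(\<forall>p1 p2 q r. p1 \<le> p2 \<and> p2 < q \<and> 1 < r \<longrightarrow> Theta p1 q r \<le> Theta p2 q r)
       \<and> (\<forall>p q1 q2 r. p < q1 \<and> q1 \<le> q2 \<and> 1 < r \<longrightarrow> Theta p q2 r \<le> Theta p q1 r)"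
proof (intro conjI allI impI; elim conjE)
  fix p1 p2 q r :: real
  assume "p1 \<le> p2" "p2 < q" "1 < r"
  then show "Theta p1 q r \<le> Theta p2 q r"
    by (intro Theta_le_Theta_if_npow_match_le npow_match_antimono_left) auto
next
  fix p q1 q2 r :: real
  assume "p < q1" "q1 \<le> q2" "1 < r"
  then show "Theta p q2 r \<le> Theta p q1 r"
    by (intro Theta_le_Theta_if_npow_match_le npow_match_mono_right) auto
qed

end
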